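(* Let $T:[0,1]\to[0,1]$ satisfy Condition 1. Suppose the set of distinct values among its slopes is $\{p\bar\Lambda_1,\dots,p\bar\Lambda_\ell\}$ with $\bar\Lambda_1<\dots<\bar\Lambda_\ell$, where $p\in\mathbb N$ and $\bar\Lambda_1,\dots,\bar\Lambda_\ell$ are pairwise relatively prime positive integers, and the slope $p\bar\Lambda_i$ occurs with multiplicity $m_i$ among the branches. Then $T$ is quantizable.
   Context: Let $I=[0,1]$. A map $T:I\to I$ satisfies Condition 1 if there are integers $\Lambda_1,\dots,\Lambda_l\geq 2$ (the slopes, one per branch) with $\sum_{j=1}^l\Lambda_j^{-1}=1$ and $I$ is divided into consecutive intervals $I_1,\dots,I_l$ with $|I_j|=\Lambda_j^{-1}$ such that on $I_j$, $T$ is affine with slope $\Lambda_j$ mapping $I_j$ onto $I$. For $N\in\mathbb N$ let $\mathcal M$ be the partition of $I$ into $E_i=[(i-1)/N,i/N]$, $i=1,\dots,N$. A sequence of such partitions $\mathcal M_\Bbbk$ with sizes $N_\Bbbk$ satisfies Condition 2 if each $N_{\Bbbk+1}/N_\Bbbk$ is an integer greater than one and every endpoint of every $I_j$ is an endpoint of an interval of $\mathcal M_1$. With $B_\Bbbk(i,j)=|E_i\cap T^{-1}E_j|/|E_i|$, $T$ is called quantizable if there is an infinite sequence $\mathcal M_\Bbbk$ satisfying Condition 2 such that for each $\Bbbk$ there is a unitary $N_\Bbbk\times N_\Bbbk$ matrix $U_\Bbbk$ with $B_\Bbbk(j,i)=|U_\Bbbk(i,j)|^2$ for all $i,j$. 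*)

theory Defs
  imports "HOL-Analysis.Analysis"
begin

text \<open>Branches are indexed by j < length Lam (0-based). The left endpoint of the
j-th branch interval I_j is the sum of the lengths of the preceding ones.\<close>
definition branch_pt :: "nat list \<Rightarrow> nat \<Rightarrow> real" where
  "branch_pt Lam j = (\<Sum>k<j. 1 / real (Lam ! k))"

text \<open>Condition 1. I_j = [branch_pt Lam j, branch_pt Lam (j+1)], of length 1/Lam_j;
T is affine with slope Lam_j on (the interior of) I_j, mapping I_j onto [0,1].\<close>
definition cond1 :: "(real \<Rightarrow> real) \<Rightarrow> nat list \<Rightarrow> bool" where
  "cond1 T Lam \<longleftrightarrow>
     Lam \<noteq> [] \<and> (\<forall>j<length Lam. Lam ! j \<ge> 2) \<and>
     (\<Sum>j<length Lam. 1 / real (Lam ! j)) = 1 \<and>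
     T ` {0..1} \<subseteq> {0..1} \<and>
     (\<forall>j<length Lam. \<forall>x. branch_pt Lam j < x \<and> x < branch_pt Lam (Suc j) \<longrightarrow>
         T x = real (Lam ! j) * (x - branch_pt Lam j))"

definition Ecell :: "nat \<Rightarrow> nat \<Rightarrow> real set" where
  "Ecell N i = {real i / real N .. real (Suc i) / real N}"

definition Bmat :: "(real \<Rightarrow> real) \<Rightarrow> nat \<Rightarrow> nat \<Rightarrow> nat \<Rightarrow> real" where
  "Bmat T N i j = measure lebesgue (Ecell N i \<inter> (T -` Ecell N j \<inter> {0..1}))
                   / measure lebesgue (Ecell N i)"

definition unitary_mat :: "nat \<Rightarrow> (nat \<Rightarrow> nat \<Rightarrow> complex) \<Rightarrow> bool" where
  "unitary_mat n U \<longleftrightarrow>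
     (\<forall>i<n. \<forall>j<n. (\<Sum>k<n. U i k * cnj (U j k)) = (if i = j then 1 else 0)) \<and>
     (\<forall>i<n. \<forall>j<n. (\<Sum>k<n. cnj (U k i) * U k j) = (if i = j then 1 else 0))"

text \<open>Condition 2 for a sequence of partition sizes Ns (Ns 0 is the first partition M_1).\<close>
definition cond2 :: "nat list \<Rightarrow> (nat \<Rightarrow> nat) \<Rightarrow> bool" where
  "cond2 Lam Ns \<longleftrightarrow>
     Ns 0 \<ge> 1 \<and> (\<forall>k. Ns k dvd Ns (Suc k) \<and> Ns (Suc k) > Ns k) \<and>
     (\<forall>j\<le>length Lam. \<exists>i\<le>Ns 0. branch_pt Lam j = real i / real (Ns 0))"

definition quantizable :: "(real \<Rightarrow> real) \<Rightarrow> nat list \<Rightarrow> bool" where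
  "quantizable T Lam \<longleftrightarrow>
     (\<exists>Ns. cond2 Lam Ns \<and>
        (\<forall>k. \<exists>U. unitary_mat (Ns k) U \<and>
              (\<forall>i<Ns k. \<forall>j<Ns k. Bmat T (Ns k) j i = (cmod (U i j))\<^sup>2)))"

end

theory Submission
  imports Defs "Jordan_Normal_Form.Determinant"
begin

text \<open>
  Take N divisible by every slope. A cell j lying in branch b at offset t from the start of the
  branch is mapped by T onto the \<Lambda>(b) consecutive cells starting at \<Lambda>(b) * t, each with weight
  1/\<Lambda>(b). Writing \<Lambda>(b) = p d and a row index as i = p q + r, these are exactly the rows with q in
  the t-th block of width d. So column j can be taken to be the tensor product of a discrete Fourier
  vector of frequency k on that block with a phase vector of frequency s modulo p, where (s, k) is a
  label of the branch b with s < p and k < d. The columns are orthonormal as soon as the labels of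
  distinct branches differ and s determines the slope. Such labels exist when the multiplicity m of
  every slope p e is divisible by e and the quotients m / e add up to p: the latter is p times the
  identity \<Sum> 1/\<Lambda>(b) = 1, and the divisibility follows from it because the e are pairwise coprime.
\<close>

lemma unitary_matI_orthonormal_columns:
  assumes "\<And>i j. i < n \<Longrightarrow> j < n \<Longrightarrow> (\<Sum>k<n. cnj (U k i) * U k j) = (if i = j then 1 else 0)"
  shows "unitary_mat n U"
proof -
  define A :: "complex Matrix.mat" where "A = Matrix.mat n n (\<lambda>(i,j). cnj (U j i))"
  define B :: "complex Matrix.mat" where "B = Matrix.mat n n (\<lambda>(i,j). U i j)"
  have carrier: "A \<in> carrier_mat n n" "B \<in> carrier_mat n n" by (auto simp: A_def B_def)
  have "A * B = 1\<^sub>m n"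
    by (rule eq_matI) (use assms in \<open>auto simp: A_def B_def scalar_prod_def lessThan_atLeast0\<close>)
  then have BA: "B * A = 1\<^sub>m n" using mat_mult_left_right_inverse[OF carrier] by blast
  have "(\<Sum>k<n. U i k * cnj (U j k)) = (if i = j then 1 else 0)" if "i < n" "j < n" for i j
  proof -
    have "(B * A) $$ (i,j) = (1\<^sub>m n :: complex Matrix.mat) $$ (i,j)" using BA by simp
    with that show ?thesis by (simp add: A_def B_def scalar_prod_def lessThan_atLeast0)
  qed
  with assms show ?thesis unfolding unitary_mat_def by blast
qed

lemma sum_roots_of_unity:
  fixes m :: int
  assumes "d > 0"
  shows "(\<Sum>x<d. cis (2 * pi * of_int m * real x / real d)) = (if int d dvd m then of_nat d else 0)"
proof -
  define z where "z = cis (2 * pi * of_int m / real d)"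
  have powers: "cis (2 * pi * of_int m * real x / real d) = z ^ x" for x
    by (simp add: z_def Complex.DeMoivre field_simps)
  have z_eq_1_iff: "z = 1 \<longleftrightarrow> int d dvd m"
  proof
    assume "z = 1"
    then have "cos (2 * pi * of_int m / real d) = 1" by (simp add: z_def complex_eq_iff)
    then obtain x :: int where "2 * pi * of_int m / real d = of_int x * 2 * pi"
      by (auto simp: cos_one_2pi_int)
    then have "of_int m = (of_int (x * int d) :: real)" using assms by (simp add: field_simps)
    then show "int d dvd m" by (simp only: of_int_eq_iff) simp
  next
    assume "int d dvd m"
    then obtain t where "m = int d * t" by blast
    with assms have "2 * pi * of_int m / real d = 2 * pi * of_int t" by simp
    then show "z = 1" unfolding z_def by (simp only:) (rule cis_multiple_2pi, simp)
  qed
  show ?thesis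
  proof (cases "int d dvd m")
    case False
    have "z ^ d = cis (2 * pi * of_int m)" using assms by (simp add: z_def Complex.DeMoivre)
    also have "\<dots> = 1" by (rule cis_multiple_2pi) simp
    finally have "z ^ d = 1" .
    with False z_eq_1_iff show ?thesis unfolding powers using geometric_sum[of z d] by simp
  qed (use z_eq_1_iff in \<open>simp add: powers\<close>)
qed

lemma nat_div_eq_iff_block:
  fixes q d b :: nat
  assumes "0 < d"
  shows "q div d = b \<longleftrightarrow> d * b \<le> q \<and> q < d * b + d"
  using assms by (auto intro: div_nat_eqI simp: div_mult_mod_eq mult.commute)
    (metis add_less_cancel_left div_mult_mod_eq mod_less_divisor mult.commute)

lemma sum_lessThan_block:
  fixes f :: "nat \<Rightarrow> 'a::comm_monoid_add"
  assumes "0 < d" "d * b + d \<le> M"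
  shows "(\<Sum>q<M. if q div d = b then f (q mod d) else 0) = (\<Sum>x<d. f x)"
proof -
  have "(\<Sum>q<M. if q div d = b then f (q mod d) else 0) = (\<Sum>q\<in>{d*b..<d*b+d}. f (q mod d))"
    using assms by (simp add: sum.If_cases nat_div_eq_iff_block Int_def) (intro sum.cong; auto)
  also have "\<dots> = (\<Sum>x<d. f x)"
    using sum.shift_bounds_nat_ivl[of "\<lambda>q. f (q mod d)" 0 "d*b" d]
    by (simp add: lessThan_atLeast0 add.commute)
  finally show ?thesis .
qed

lemma sum_lessThan_mult_div_mod:
  fixes f g :: "nat \<Rightarrow> 'a::comm_semiring_0"
  shows "(\<Sum>i<p*M. f (i div p) * g (i mod p)) = (\<Sum>q<M. f q) * (\<Sum>r<p. g r)"
proof -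
  have "(\<Sum>i\<in>{q*p..<q*p+p}. f (i div p) * g (i mod p)) = f q * (\<Sum>r<p. g r)" for q
    using sum.shift_bounds_nat_ivl[of "\<lambda>i. f (i div p) * g (i mod p)" 0 "q*p" p]
    by (simp add: lessThan_atLeast0 sum_distrib_left add.commute)
  then show ?thesis
    using sum.nat_group[of "\<lambda>i. f (i div p) * g (i mod p)" p M]
    by (simp add: mult.commute sum_product sum_distrib_right)
qed

definition block_fourier :: "nat \<Rightarrow> nat \<Rightarrow> nat \<Rightarrow> nat \<Rightarrow> complex" where
  "block_fourier d b k q =
     (if q div d = b then cis (2 * pi * real k * real (q mod d) / real d) / of_real (sqrt (real d))
      else 0)"

lemma norm_block_fourier_squared:
  assumes "0 < d"
  shows "(cmod (block_fourier d b k q))\<^sup>2 = (if q div d = b then 1 / real d else 0)"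
  using assms by (simp add: block_fourier_def norm_divide power_divide)

lemma block_fourier_orthonormal:
  assumes "0 < d" "k < d" "k' < d" "d * b + d \<le> M"
  shows "(\<Sum>q<M. cnj (block_fourier d b k q) * block_fourier d b' k' q) =
    (if b = b' \<and> k = k' then 1 else 0)"
proof (cases "b = b'")
  case True
  define m where "m = int k' - int k"
  have summand: "cnj (block_fourier d b k q) * block_fourier d b k' q =
      (if q div d = b then cis (2 * pi * of_int m * real (q mod d) / real d) / of_nat d else 0)" for q
  proof -
    have "of_real (sqrt (real d)) * of_real (sqrt (real d)) = (of_nat d :: complex)"
      by (simp flip: of_real_mult)
    then show ?thesis
      by (simp add: block_fourier_def cis_cnj cis_mult m_def field_simps diff_divide_distrib)
  qed
  have "\<bar>m\<bar> < int d" using assms(2,3) by (simp add: m_def)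
  then have "int d dvd m \<longleftrightarrow> k = k'"
    using dvd_imp_le_int[of m "int d"] by (auto simp: m_def)
  note block_sum = sum_lessThan_block[OF assms(1,4),
      of "\<lambda>x. cis (2 * pi * of_int m * real x / real d) / of_nat d"]
  have "(\<Sum>q<M. cnj (block_fourier d b k q) * block_fourier d b k' q) =
      (\<Sum>x<d. cis (2 * pi * of_int m * real x / real d)) / of_nat d"
    unfolding summand block_sum by (simp add: sum_divide_distrib)
  also have "\<dots> = (if k = k' then 1 else 0)"
    using \<open>int d dvd m \<longleftrightarrow> k = k'\<close> assms(1) by (simp add: sum_roots_of_unity)
  finally show ?thesis using True by simp
next
  case False
  then show ?thesis by (auto intro!: sum.neutral simp: block_fourier_def)
qed

lemma unitary_block_fourier_tensor:
  assumes "0 < p"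
    and params: "\<And>j. j < p * M \<Longrightarrow> 0 < d j \<and> k j < d j \<and> d j * b j + d j \<le> M \<and> s j < p"
    and same_width: "\<And>j j'. j < p * M \<Longrightarrow> j' < p * M \<Longrightarrow> s j = s j' \<Longrightarrow> d j = d j'"
    and inj: "inj_on (\<lambda>j. (b j, s j, k j)) {..<p * M}"
  shows "unitary_mat (p * M)
    (\<lambda>i j. block_fourier (d j) (b j) (k j) (i div p) * block_fourier p 0 (s j) (i mod p))"
proof (rule unitary_matI_orthonormal_columns)
  fix j j' assume j: "j < p * M" and j': "j' < p * M"
  let ?F = "\<lambda>q. cnj (block_fourier (d j) (b j) (k j) q) * block_fourier (d j') (b j') (k j') q"
  let ?G = "\<lambda>r. cnj (block_fourier p 0 (s j) r) * block_fourier p 0 (s j') r"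
  have "(\<Sum>r<p. ?G r) = (if s j = s j' then 1 else 0)"
    using block_fourier_orthonormal[of p "s j" "s j'" 0 p] params[OF j] params[OF j'] \<open>0 < p\<close>
    by simp
  moreover have "(\<Sum>q<M. ?F q) = (if b j = b j' \<and> k j = k j' then 1 else 0)" if "s j = s j'"
    using block_fourier_orthonormal params[OF j] params[OF j'] same_width[OF j j' that] by simp
  ultimately have "(\<Sum>q<M. ?F q) * (\<Sum>r<p. ?G r) = (if j = j' then 1 else 0)"
    using inj j j' same_width[OF j j'] by (auto simp: inj_on_def)
  then show "(\<Sum>i<p * M. cnj (block_fourier (d j) (b j) (k j) (i div p) * block_fourier p 0 (s j) (i mod p)) *
      (block_fourier (d j') (b j') (k j') (i div p) * block_fourier p 0 (s j') (i mod p))) =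
    (if j = j' then 1 else 0)"
    using sum_lessThan_mult_div_mod[where f = ?F and g = ?G and p = p and M = M] by (simp add: mult_ac)
qed

lemma measure_Ioo_Int_Icc:
  fixes a c lo hi :: real
  assumes "a \<le> lo" "lo \<le> hi" "hi \<le> c"
  shows "measure lebesgue ({a<..<c} \<inter> {lo..hi}) = hi - lo"
proof -
  have "{a<..<c} \<inter> {lo..hi} = {lo..hi} - {a, c}" using assms by auto
  moreover have "{a, c} \<in> null_sets lebesgue"
    using negligible_iff_null_sets negligible_finite by blast
  ultimately show ?thesis using assms by (simp add: measure_Diff_null_set)
qed

lemma measure_grid_Ioo_Int_Icc:
  fixes u s :: real and m L i :: nat
  assumes "0 < s"
  shows "measure lebesgue ({u + s * m<..<u + s * (m + L)} \<inter> {u + s * i..u + s * (i + 1)}) =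
    (if m \<le> i \<and> i < m + L then s else 0)"
proof (cases "m \<le> i \<and> i < m + L")
  case True
  then have "real m \<le> real i" "real i + 1 \<le> real (m + L)" by linarith+
  with assms have "u + s * m \<le> u + s * i" "u + s * i \<le> u + s * (i + 1)" "u + s * (i + 1) \<le> u + s * (m + L)"
    by (simp_all add: mult_left_mono)
  then have "measure lebesgue ({u + s * m<..<u + s * (m + L)} \<inter> {u + s * i..u + s * (i + 1)}) =
      u + s * (i + 1) - (u + s * i)"
    by (rule measure_Ioo_Int_Icc)
  with True show ?thesis by (simp add: algebra_simps)
next
  case False
  then have "real i + 1 \<le> real m \<or> real (m + L) \<le> real i" by linarith
  with assms have "u + s * (i + 1) \<le> u + s * m \<or> u + s * (m + L) \<le> u + s * i"
    by (auto simp: mult_left_mono)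
  then have "{u + s * m<..<u + s * (m + L)} \<inter> {u + s * i..u + s * (i + 1)} = {}" by auto
  with False show ?thesis by auto
qed

lemma Bmat_affine_cell:
  fixes T :: "real \<Rightarrow> real" and N K L i j :: nat
  assumes "0 < N" "0 < L" "j < N" "K \<le> j"
    and affine: "\<And>x. real j / real N < x \<Longrightarrow> x < real (Suc j) / real N \<Longrightarrow>
      T x = real L * (x - real K / real N)"
  shows "Bmat T N j i = (if L * (j - K) \<le> i \<and> i < L * (j - K) + L then 1 / real L else 0)"
proof -
  obtain t where t: "j = K + t" using assms(4) le_Suc_ex by blast
  define u where "u = real K / real N"
  define s where "s = 1 / (real N * real L)"
  define a where "a = u + s * real (L * t)"
  define c where "c = u + s * real (L * t + L)"
  define S where "S = Ecell N j \<inter> (T -` Ecell N i \<inter> {0..1})"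
  have NL: "0 < real N" "0 < real L" "0 < s" using assms(1,2) by (auto simp: s_def)
  have a_eq: "a = real j / real N" and c_eq: "c = real (Suc j) / real N"
    using NL by (simp_all add: a_def c_def u_def s_def t field_simps)
  have cell: "Ecell N j = {a..c}" by (simp add: Ecell_def a_eq c_eq)
  have "0 \<le> a" "c \<le> 1" using assms(3) NL by (simp_all add: a_eq c_eq)
  have preimage: "T x \<in> Ecell N i \<longleftrightarrow> x \<in> {u + s * i..u + s * (i + 1)}" if "a < x" "x < c" for x
    using affine[OF that[unfolded a_eq c_eq]] NL
    by (simp add: Ecell_def u_def s_def field_simps) linarith
  have "S - {a, c} = {a<..<c} \<inter> {u + s * i..u + s * (i + 1)}"
  proof (intro equalityI subsetI)
    fix x assume "x \<in> S - {a, c}"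
    then have "x \<in> {a<..<c}" "T x \<in> Ecell N i" using cell by (auto simp: S_def)
    with preimage show "x \<in> {a<..<c} \<inter> {u + s * i..u + s * (i + 1)}" by auto
  next
    fix x assume x: "x \<in> {a<..<c} \<inter> {u + s * i..u + s * (i + 1)}"
    with preimage have "T x \<in> Ecell N i" by auto
    moreover have "x \<in> Ecell N j" "x \<in> {0..1}" using x cell \<open>0 \<le> a\<close> \<open>c \<le> 1\<close> by auto
    ultimately show "x \<in> S - {a, c}" using x by (auto simp: S_def)
  qed
  moreover have "S \<inter> {a, c} \<in> null_sets lebesgue"
    using negligible_iff_null_sets negligible_finite by blast
  moreover have "{a<..<c} \<inter> {u + s * i..u + s * (i + 1)} \<in> sets lebesgue" by simp
  ultimately have "measure lebesgue S = measure lebesgue ({a<..<c} \<inter> {u + s * i..u + s * (i + 1)})"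
    by (metis Un_Diff_Int measure_Un_null_set)
  also have "\<dots> = (if L * t \<le> i \<and> i < L * t + L then s else 0)"
    unfolding a_def c_def by (rule measure_grid_Ioo_Int_Icc[OF \<open>0 < s\<close>])
  finally have measure_S: "measure lebesgue S = (if L * t \<le> i \<and> i < L * t + L then s else 0)" .
  have measure_cell: "measure lebesgue (Ecell N j) = 1 / real N"
    using NL by (simp add: Ecell_def diff_divide_distrib[symmetric] divide_right_mono)
  have "Bmat T N j i = measure lebesgue S / measure lebesgue (Ecell N j)"
    by (simp add: Bmat_def S_def)
  also have "\<dots> = (if L * t \<le> i \<and> i < L * t + L then 1 / real L else 0)"
    unfolding measure_S measure_cell using NL by (simp add: s_def)
  finally show ?thesis by (simp add: t)
qed

lemma dvd_numerator_of_coprime_denominators: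
  fixes c :: "nat \<Rightarrow> nat"
  assumes "finite D" "0 \<notin> D" "pairwise coprime D"
    and sum: "(\<Sum>e\<in>D. real (c e) / real e) = real n"
    and "e \<in> D"
  shows "e dvd c e"
proof -
  define P where "P = \<Prod>(D - {e})"
  have "e' dvd P" if "e' \<in> D - {e}" for e'
    unfolding P_def using that assms(1) by (intro dvd_prodI) auto
  then have cofactor: "real P / real e' = real (P div e')" if "e' \<in> D - {e}" for e'
    using that by (simp add: real_of_nat_div)
  have "real (n * e * P) = real e * real P * (\<Sum>e\<in>D. real (c e) / real e)"
    using sum by simp
  also have "\<dots> = real e * real P * (real (c e) / real e) +
      (\<Sum>e'\<in>D - {e}. real e * real P * (real (c e') / real e'))"
    using assms(1,5) by (simp only: sum.remove distrib_left sum_distrib_left)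
  also have "\<dots> = real (c e * P + (\<Sum>e'\<in>D - {e}. c e' * e * (P div e')))"
  proof -
    have "real e * real P * (real (c e') / real e') = real (c e' * e * (P div e'))"
      if "e' \<in> D - {e}" for e'
    proof -
      have "real e * real P * (real (c e') / real e') = real e * real (c e') * (real P / real e')"
        by (simp add: ac_simps)
      then show ?thesis using cofactor[OF that] by simp
    qed
    moreover have "real e * real P * (real (c e) / real e) = real (c e * P)"
      using assms(2,5) by (cases "e = 0") auto
    ultimately show ?thesis by simp
  qed
  finally have "c e * P + (\<Sum>e'\<in>D - {e}. c e' * e * (P div e')) = n * e * P"
    by (simp only: of_nat_eq_iff)
  then have "e dvd c e * P + (\<Sum>e'\<in>D - {e}. c e' * e * (P div e'))" by simp
  moreover have "e dvd (\<Sum>e'\<in>D - {e}. c e' * e * (P div e'))" by (intro dvd_sum) simp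
  ultimately have "e dvd c e * P" by (simp add: dvd_add_left_iff)
  moreover have "coprime e P"
    unfolding P_def using assms(3,5) by (intro prod_coprime_right) (auto simp: pairwise_def)
  ultimately show ?thesis using coprime_dvd_mult_left_iff by blast
qed

lemma sum_list_map_eq_sum_count_of_nat:
  fixes f :: "'a \<Rightarrow> 'b::comm_semiring_1"
  shows "sum_list (map f xs) = (\<Sum>x\<in>set xs. of_nat (count_list xs x) * f x)"
proof (induction xs)
  case (Cons y xs)
  have "(\<Sum>x\<in>set (y # xs). of_nat (count_list (y # xs) x) * f x) =
      (\<Sum>x\<in>insert y (set xs). of_nat (count_list xs x) * f x + (if x = y then f y else 0))"
    by (intro sum.cong) (auto simp: distrib_right add.commute)
  also have "\<dots> = (\<Sum>x\<in>insert y (set xs). of_nat (count_list xs x) * f x) + f y"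
    by (simp add: sum.distrib)
  also have "(\<Sum>x\<in>insert y (set xs). of_nat (count_list xs x) * f x) =
      (\<Sum>x\<in>set xs. of_nat (count_list xs x) * f x)"
    by (simp add: sum.insert_if count_list_0_iff)
  finally show ?case using Cons by (simp add: add.commute)
qed simp

lemma slope_multiplicities:
  fixes Lam Lbar :: "nat list"
  assumes sum1: "(\<Sum>j<length Lam. 1 / real (Lam ! j)) = 1"
    and "0 < p" "0 \<notin> set Lam"
    and coprime: "pairwise coprime (set Lbar)"
    and slopes: "set Lam = (\<lambda>e. p * e) ` set Lbar"
  shows "\<And>v. v \<in> set Lam \<Longrightarrow> v div p dvd count_list Lam v"
    and "(\<Sum>v\<in>set Lam. count_list Lam v div (v div p)) = p"
proof -
  have inj: "inj_on (\<lambda>e. p * e) (set Lbar)" using \<open>0 < p\<close> by (simp add: inj_on_def)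
  have "0 \<notin> set Lbar" using \<open>0 \<notin> set Lam\<close> slopes by auto
  have "1 = (\<Sum>v\<in>set Lam. real (count_list Lam v) / real v)"
    using sum1 sum_list_map_eq_sum_count_of_nat[of "\<lambda>v. 1 / real v" Lam]
    by (simp add: sum_list_sum_nth atLeast0LessThan)
  also have "\<dots> = (\<Sum>e\<in>set Lbar. real (count_list Lam (p * e)) / real (p * e))"
    unfolding slopes by (simp add: sum.reindex[OF inj])
  finally have "real p = real p * (\<Sum>e\<in>set Lbar. real (count_list Lam (p * e)) / real (p * e))"
    by simp
  also have "\<dots> = (\<Sum>e\<in>set Lbar. real (count_list Lam (p * e)) / real e)"
    unfolding sum_distrib_left using \<open>0 < p\<close> by (intro sum.cong) auto
  finally have weights: "(\<Sum>e\<in>set Lbar. real (count_list Lam (p * e)) / real e) = real p" ..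
  have dvd: "e dvd count_list Lam (p * e)" if "e \<in> set Lbar" for e
    using dvd_numerator_of_coprime_denominators[OF _ \<open>0 \<notin> set Lbar\<close> coprime weights that] by simp
  then show "v div p dvd count_list Lam v" if "v \<in> set Lam" for v
    using that \<open>0 < p\<close> unfolding slopes by auto
  have "real (\<Sum>v\<in>set Lam. count_list Lam v div (v div p)) =
      (\<Sum>e\<in>set Lbar. real (count_list Lam (p * e)) / real e)"
    unfolding slopes using dvd \<open>0 < p\<close> by (simp add: sum.reindex[OF inj] real_of_nat_div)
  with weights show "(\<Sum>v\<in>set Lam. count_list Lam v div (v div p)) = p" by linarith
qed

lemma exists_grouped_labelling:
  fixes g :: "'a \<Rightarrow> 'b" and w :: "'b \<Rightarrow> nat"
  assumes "finite A"
    and dvd: "\<And>v. v \<in> g ` A \<Longrightarrow> w v dvd card {x\<in>A. g x = v}"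
    and total: "(\<Sum>v\<in>g ` A. card {x\<in>A. g x = v} div w v) = p"
  obtains lab :: "'a \<Rightarrow> nat \<times> nat"
  where "inj_on lab A"
    and "\<And>x. x \<in> A \<Longrightarrow> fst (lab x) < p \<and> snd (lab x) < w (g x)"
    and "\<And>x y. x \<in> A \<Longrightarrow> y \<in> A \<Longrightarrow> fst (lab x) = fst (lab y) \<Longrightarrow> g x = g y"
proof -
  define n where "n v = card {x\<in>A. g x = v} div w v" for v
  define C where "C = Sigma (g ` A) (\<lambda>v. {..<n v})"
  have "card C = card {..<p}"
    using \<open>finite A\<close> total by (simp add: C_def n_def card_SigmaI)
  then obtain G where G: "bij_betw G C {..<p}"
    using \<open>finite A\<close> finite_same_card_bij[of C "{..<p}"] by (auto simp: C_def)
  have "\<exists>h. bij_betw h {x\<in>A. g x = v} ({..<n v} \<times> {..<w v})" if "v \<in> g ` A" for v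
  proof -
    have "card {x\<in>A. g x = v} = card ({..<n v} \<times> {..<w v})"
      using dvd[OF that] by (simp add: n_def card_cartesian_product)
    then show ?thesis using \<open>finite A\<close> by (intro finite_same_card_bij) auto
  qed
  then obtain h where h: "\<And>v. v \<in> g ` A \<Longrightarrow> bij_betw (h v) {x\<in>A. g x = v} ({..<n v} \<times> {..<w v})"
    by metis
  define lab where "lab x = (G (g x, fst (h (g x) x)), snd (h (g x) x))" for x
  have h_range: "h (g x) x \<in> {..<n (g x)} \<times> {..<w (g x)}" if "x \<in> A" for x
    using bij_betw_apply[OF h] that by auto
  then have in_C: "(g x, fst (h (g x) x)) \<in> C" if "x \<in> A" for x
    using that by (auto simp: C_def mem_Times_iff)
  have fst_lab: "g x = g y \<and> fst (h (g x) x) = fst (h (g y) y)"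
    if "x \<in> A" "y \<in> A" "fst (lab x) = fst (lab y)" for x y
    using bij_betw_imp_inj_on[OF G] in_C that by (auto simp: lab_def inj_on_def)
  show thesis
  proof
    show "inj_on lab A"
    proof (rule inj_onI)
      fix x y assume xy: "x \<in> A" "y \<in> A" "lab x = lab y"
      then have "fst (lab x) = fst (lab y)" by simp
      with fst_lab[OF xy(1,2)] xy(3) have "g x = g y" "h (g x) x = h (g x) y"
        by (auto simp: lab_def prod_eq_iff)
      with xy show "x = y" using bij_betw_imp_inj_on[OF h, of "g x"] by (auto simp: inj_on_def)
    qed
    show "fst (lab x) < p \<and> snd (lab x) < w (g x)" if "x \<in> A" for x
      using bij_betw_apply[OF G in_C[OF that]] h_range[OF that] by (auto simp: lab_def mem_Times_iff)
    show "g x = g y" if "x \<in> A" "y \<in> A" "fst (lab x) = fst (lab y)" for x y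
      using fst_lab[OF that] by simp
  qed
qed

definition branch_cell :: "nat list \<Rightarrow> nat \<Rightarrow> nat \<Rightarrow> nat" where
  "branch_cell Lam N b = (\<Sum>k<b. N div Lam ! k)"

lemma branch_cell_Suc: "branch_cell Lam N (Suc b) = branch_cell Lam N b + N div Lam ! b"
  by (simp add: branch_cell_def)

lemma branch_pt_eq_branch_cell:
  assumes "\<forall>b<length Lam. Lam ! b dvd N" "0 < N" "b \<le> length Lam"
  shows "branch_pt Lam b = real (branch_cell Lam N b) / real N"
proof -
  have "real (branch_cell Lam N b) = (\<Sum>k<b. real N / real (Lam ! k))"
    unfolding branch_cell_def of_nat_sum using assms by (intro sum.cong) (auto simp: real_of_nat_div)
  also have "\<dots> = real N * branch_pt Lam b" by (simp add: branch_pt_def sum_distrib_left)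
  finally show ?thesis using assms(2) by simp
qed

lemma branch_cell_length:
  assumes "cond1 T Lam" "\<forall>b<length Lam. Lam ! b dvd N" "0 < N"
  shows "branch_cell Lam N (length Lam) = N"
proof -
  have "branch_pt Lam (length Lam) = 1" using assms(1) by (simp add: cond1_def branch_pt_def)
  with branch_pt_eq_branch_cell[OF assms(2,3)] assms(3) show ?thesis by simp
qed

lemma branch_cell_mono: "b \<le> b' \<Longrightarrow> branch_cell Lam N b \<le> branch_cell Lam N b'"
  unfolding branch_cell_def by (intro sum_mono2) auto

lemma cell_in_branch:
  "j < branch_cell Lam N n \<Longrightarrow> \<exists>b<n. branch_cell Lam N b \<le> j \<and> j < branch_cell Lam N (Suc b)"
proof (induction n)
  case (Suc n)
  then show ?case by (cases "j < branch_cell Lam N n") (auto simp: less_Suc_eq)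
qed (simp add: branch_cell_def)

lemma Bmat_branch_cell:
  assumes "cond1 T Lam" "\<forall>b<length Lam. Lam ! b dvd N" "0 < N"
    and b: "b < length Lam" "branch_cell Lam N b \<le> j" "j < branch_cell Lam N (Suc b)"
  shows "Bmat T N j i = (if i div Lam ! b = j - branch_cell Lam N b then 1 / real (Lam ! b) else 0)"
proof -
  let ?K = "branch_cell Lam N b"
  have "0 < Lam ! b" using assms(1) b(1) by (auto simp: cond1_def)
  have "j < N"
    using b(3) branch_cell_mono[of "Suc b" "length Lam" Lam N] b(1)
    unfolding branch_cell_length[OF assms(1-3)] by simp
  have affine: "T x = real (Lam ! b) * (x - real ?K / real N)"
    if "real j / real N < x" "x < real (Suc j) / real N" for x
  proof -
    have "real ?K / real N \<le> real j / real N" "real (Suc j) / real N \<le> real (branch_cell Lam N (Suc b)) / real N"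
      using b(2,3) \<open>0 < N\<close> by (simp_all add: divide_right_mono)
    then have "branch_pt Lam b < x \<and> x < branch_pt Lam (Suc b)"
      using that b(1) branch_pt_eq_branch_cell[OF assms(2,3)] by simp
    with assms(1) b(1) branch_pt_eq_branch_cell[OF assms(2,3)] show ?thesis
      by (simp add: cond1_def)
  qed
  show ?thesis
    using Bmat_affine_cell[OF \<open>0 < N\<close> \<open>0 < Lam ! b\<close> \<open>j < N\<close> b(2) affine]
      nat_div_eq_iff_block[OF \<open>0 < Lam ! b\<close>, of i "j - ?K"]
    by (simp add: ac_simps)
qed

definition branch_labelling :: "nat \<Rightarrow> nat list \<Rightarrow> (nat \<Rightarrow> nat \<times> nat) \<Rightarrow> bool" where
  "branch_labelling p Lam lab \<longleftrightarrow> inj_on lab {..<length Lam} \<and>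
     (\<forall>b<length Lam. fst (lab b) < p \<and> snd (lab b) < Lam ! b div p) \<and>
     (\<forall>b<length Lam. \<forall>b'<length Lam. fst (lab b) = fst (lab b') \<longrightarrow> Lam ! b = Lam ! b')"

lemma card_nth_eq_count_list: "card {i\<in>{..<length xs}. xs ! i = v} = count_list xs v"
  by (simp add: count_list_eq_length_filter length_filter_conv_card eq_commute)

lemma exists_branch_labelling:
  assumes "cond1 T Lam" "0 < p" "pairwise coprime (set Lbar)" "set Lam = (\<lambda>e. p * e) ` set Lbar"
  shows "\<exists>lab. branch_labelling p Lam lab"
proof -
  have sum1: "(\<Sum>j<length Lam. 1 / real (Lam ! j)) = 1" and "0 \<notin> set Lam"
    using assms(1) by (auto simp: cond1_def in_set_conv_nth)
  note multiplicities = slope_multiplicities[OF sum1 assms(2) \<open>0 \<notin> set Lam\<close> assms(3,4)]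
  have nth_image: "(!) Lam ` {..<length Lam} = set Lam" by (auto simp: in_set_conv_nth)
  show ?thesis
  proof (rule exists_grouped_labelling[where g = "(!) Lam" and w = "\<lambda>v. v div p", OF finite_lessThan])
    show "v div p dvd card {b\<in>{..<length Lam}. Lam ! b = v}" if "v \<in> (!) Lam ` {..<length Lam}" for v
      using multiplicities(1) that unfolding nth_image card_nth_eq_count_list .
    show "(\<Sum>v\<in>(!) Lam ` {..<length Lam}. card {b\<in>{..<length Lam}. Lam ! b = v} div (v div p)) = p"
      using multiplicities(2) unfolding nth_image card_nth_eq_count_list .
  next
    fix lab :: "nat \<Rightarrow> nat \<times> nat"
    assume "inj_on lab {..<length Lam}"
      and "\<And>b. b \<in> {..<length Lam} \<Longrightarrow> fst (lab b) < p \<and> snd (lab b) < Lam ! b div p"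
      and "\<And>b b'. b \<in> {..<length Lam} \<Longrightarrow> b' \<in> {..<length Lam} \<Longrightarrow> fst (lab b) = fst (lab b') \<Longrightarrow>
        Lam ! b = Lam ! b'"
    then have "branch_labelling p Lam lab" unfolding branch_labelling_def lessThan_iff by blast
    then show ?thesis by blast
  qed
qed

definition cell_branch :: "nat list \<Rightarrow> nat \<Rightarrow> nat \<Rightarrow> nat" where
  "cell_branch Lam N j =
     (SOME b. b < length Lam \<and> branch_cell Lam N b \<le> j \<and> j < branch_cell Lam N (Suc b))"

definition quantization_matrix ::
    "nat \<Rightarrow> nat list \<Rightarrow> (nat \<Rightarrow> nat \<times> nat) \<Rightarrow> nat \<Rightarrow> nat \<Rightarrow> nat \<Rightarrow> complex" where
  "quantization_matrix p Lam lab N i j =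
     (let b = cell_branch Lam N j
      in block_fourier (Lam ! b div p) (j - branch_cell Lam N b) (snd (lab b)) (i div p) *
         block_fourier p 0 (fst (lab b)) (i mod p))"

context
  fixes T :: "real \<Rightarrow> real" and Lam :: "nat list" and p N :: nat and lab :: "nat \<Rightarrow> nat \<times> nat"
  assumes cond1: "cond1 T Lam" and "0 < p" and p_dvd: "\<forall>b<length Lam. p dvd Lam ! b"
    and N_dvd: "\<forall>b<length Lam. Lam ! b dvd N" and "0 < N"
    and lab: "branch_labelling p Lam lab"
begin

lemma cell_branch:
  assumes "j < N"
  shows "cell_branch Lam N j < length Lam \<and> branch_cell Lam N (cell_branch Lam N j) \<le> j \<and>
    j < branch_cell Lam N (Suc (cell_branch Lam N j))"
  unfolding cell_branch_def
  using someI_ex[OF cell_in_branch] assms branch_cell_length[OF cond1 N_dvd \<open>0 < N\<close>] by simp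

lemma cell_block_params:
  assumes "j < N"
  defines "b \<equiv> cell_branch Lam N j"
  defines "d \<equiv> Lam ! b div p"
  shows "Lam ! b = p * d" and "0 < d" and "snd (lab b) < d" and "fst (lab b) < p"
    and "d * (j - branch_cell Lam N b) + d \<le> N div p"
proof -
  have b: "b < length Lam" "branch_cell Lam N b \<le> j" "j < branch_cell Lam N (Suc b)"
    using cell_branch[OF assms(1)] by (simp_all add: b_def)
  show slope: "Lam ! b = p * d" using p_dvd b(1) by (simp add: d_def)
  have "2 \<le> Lam ! b" using cond1 b(1) by (simp add: cond1_def)
  with slope show "0 < d" by (cases "d = 0") auto
  show "snd (lab b) < d" "fst (lab b) < p"
    using lab b(1) unfolding branch_labelling_def d_def by blast+
  have "j - branch_cell Lam N b < N div Lam ! b"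
    using b(2,3) unfolding branch_cell_Suc by linarith
  then have "Suc (j - branch_cell Lam N b) * Lam ! b \<le> N div Lam ! b * Lam ! b"
    by (intro mult_le_mono1) simp
  also have "\<dots> = N" using N_dvd b(1) by simp
  finally have "(d * (j - branch_cell Lam N b) + d) * p \<le> N"
    using slope by (simp add: algebra_simps)
  with \<open>0 < p\<close> show "d * (j - branch_cell Lam N b) + d \<le> N div p"
    by (simp add: less_eq_div_iff_mult_less_eq)
qed

lemma unitary_quantization_matrix: "unitary_mat N (quantization_matrix p Lam lab N)"
proof -
  let ?b = "cell_branch Lam N"
  have lab_inj: "inj_on lab {..<length Lam}"
    and lab_slope: "\<And>b b'. b < length Lam \<Longrightarrow> b' < length Lam \<Longrightarrow> fst (lab b) = fst (lab b') \<Longrightarrow>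
      Lam ! b = Lam ! b'"
    using lab unfolding branch_labelling_def by blast+
  have "Lam \<noteq> []" using cond1 by (simp add: cond1_def)
  then have "p dvd N" using dvd_trans[of p "Lam ! 0" N] p_dvd N_dvd by simp
  then have N: "p * (N div p) = N" by simp
  have "unitary_mat (p * (N div p)) (\<lambda>i j.
      block_fourier (Lam ! ?b j div p) (j - branch_cell Lam N (?b j)) (snd (lab (?b j))) (i div p) *
      block_fourier p 0 (fst (lab (?b j))) (i mod p))"
  proof (rule unitary_block_fourier_tensor[OF \<open>0 < p\<close>])
    fix j j' assume "j < p * (N div p)" "j' < p * (N div p)"
    then have j: "j < N" and j': "j' < N" unfolding N .
    show "0 < Lam ! ?b j div p \<and> snd (lab (?b j)) < Lam ! ?b j div p \<and>
        Lam ! ?b j div p * (j - branch_cell Lam N (?b j)) + Lam ! ?b j div p \<le> N div p \<and>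
        fst (lab (?b j)) < p"
      using cell_block_params(2-5)[OF j] by blast
    show "Lam ! ?b j div p = Lam ! ?b j' div p" if "fst (lab (?b j)) = fst (lab (?b j'))"
      using lab_slope[OF _ _ that] cell_branch[OF j] cell_branch[OF j'] by simp
  next
    show "inj_on (\<lambda>j. (j - branch_cell Lam N (?b j), fst (lab (?b j)), snd (lab (?b j)))) {..<p * (N div p)}"
    proof (rule inj_onI)
      fix j j' assume "j \<in> {..<p * (N div p)}" "j' \<in> {..<p * (N div p)}"
        and eq: "(j - branch_cell Lam N (?b j), fst (lab (?b j)), snd (lab (?b j))) =
          (j' - branch_cell Lam N (?b j'), fst (lab (?b j')), snd (lab (?b j')))"
      then have j: "j < N" and j': "j' < N" unfolding N by simp_all
      from eq have "lab (?b j) = lab (?b j')" by (simp add: prod_eq_iff)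
      then have "?b j = ?b j'"
        using inj_onD[OF lab_inj] cell_branch[OF j] cell_branch[OF j'] by simp
      with eq cell_branch[OF j] cell_branch[OF j'] show "j = j'" by auto
    qed
  qed
  then show ?thesis unfolding N by (simp add: quantization_matrix_def[abs_def] Let_def)
qed

lemma Bmat_eq_quantization_matrix:
  assumes "i < N" "j < N"
  shows "Bmat T N j i = (cmod (quantization_matrix p Lam lab N i j))\<^sup>2"
proof -
  define b where "b = cell_branch Lam N j"
  define d where "d = Lam ! b div p"
  note params = cell_block_params[OF assms(2), folded b_def d_def]
  have slope: "Lam ! b = p * d" unfolding d_def by (rule params(1))
  have b: "b < length Lam" "branch_cell Lam N b \<le> j" "j < branch_cell Lam N (Suc b)"
    using cell_branch[OF assms(2)] by (simp_all add: b_def)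
  have "Bmat T N j i = (if i div Lam ! b = j - branch_cell Lam N b then 1 / real (Lam ! b) else 0)"
    by (rule Bmat_branch_cell[OF cond1 N_dvd \<open>0 < N\<close> b])
  moreover have "i mod p div p = 0" using \<open>0 < p\<close> by simp
  then have "(cmod (quantization_matrix p Lam lab N i j))\<^sup>2 =
      (if i div p div d = j - branch_cell Lam N b then 1 / real d else 0) * (1 / real p)"
    using params(2) \<open>0 < p\<close>
    by (simp add: quantization_matrix_def Let_def norm_mult power_mult_distrib
        norm_block_fourier_squared b_def d_def)
  moreover have "i div p div d = i div Lam ! b" unfolding slope by (simp add: div_mult2_eq)
  ultimately show ?thesis unfolding slope by simp
qed

end

lemma cond2_prod_list_times_power2:
  assumes "cond1 T Lam"
  shows "cond2 Lam (\<lambda>k. prod_list Lam * 2 ^ k)"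
proof -
  define N where "N = prod_list Lam"
  have "0 \<notin> set Lam" using assms by (auto simp: cond1_def in_set_conv_nth)
  then have "0 < N" unfolding N_def by (metis gr0I prod_list_zero_iff)
  have N_dvd: "\<forall>b<length Lam. Lam ! b dvd N" by (simp add: N_def prod_list_dvd)
  have "\<exists>i\<le>N. branch_pt Lam j = real i / real N" if "j \<le> length Lam" for j
    using branch_pt_eq_branch_cell[OF N_dvd \<open>0 < N\<close> that] branch_cell_mono[OF that, of Lam N]
      branch_cell_length[OF assms N_dvd \<open>0 < N\<close>]
    by auto
  with \<open>0 < N\<close> show ?thesis by (simp add: cond2_def N_def)
qed

theorem theorem4:
  fixes T :: "real \<Rightarrow> real" and Lam :: "nat list" and p :: nat and Lbar :: "nat list"
  assumes "cond1 T Lam"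
    and "p \<ge> 1"
    and "sorted_wrt (<) Lbar"
    and "\<forall>i<length Lbar. Lbar ! i > 0"
    and "\<forall>i<length Lbar. \<forall>j<length Lbar. i \<noteq> j \<longrightarrow> coprime (Lbar ! i) (Lbar ! j)"
    and "set Lam = (\<lambda>b. p * b) ` set Lbar"
  shows "quantizable T Lam"
proof -
  \<comment> \<open>Neither the ordering of Lbar nor the positivity of its entries is needed; positivity
    already follows from all slopes being at least 2.\<close>
  have "0 < p" using assms(2) by simp
  have "pairwise coprime (set Lbar)"
  proof (rule pairwiseI)
    fix x y assume "x \<in> set Lbar" "y \<in> set Lbar" "x \<noteq> y"
    with assms(5) show "coprime x y" by (auto simp: in_set_conv_nth)
  qed
  then obtain lab where lab: "branch_labelling p Lam lab"
    using exists_branch_labelling[OF assms(1) \<open>0 < p\<close> _ assms(6)] by blast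
  have p_dvd: "\<forall>b<length Lam. p dvd Lam ! b" using assms(6) by (auto dest!: nth_mem)
  have "0 \<notin> set Lam" using assms(1) by (auto simp: cond1_def in_set_conv_nth)
  then have "0 < prod_list Lam" by (metis gr0I prod_list_zero_iff)
  define N where "N k = prod_list Lam * 2 ^ k" for k :: nat
  have N_pos: "0 < N k" and N_dvd: "\<forall>b<length Lam. Lam ! b dvd N k" for k
    using \<open>0 < prod_list Lam\<close> by (simp_all add: N_def prod_list_dvd dvd_mult2)
  have "cond2 Lam N" unfolding N_def by (rule cond2_prod_list_times_power2[OF assms(1)])
  moreover have "unitary_mat (N k) (quantization_matrix p Lam lab (N k))" for k
    by (rule unitary_quantization_matrix[OF assms(1) \<open>0 < p\<close> p_dvd N_dvd N_pos lab])
  moreover have "Bmat T (N k) j i = (cmod (quantization_matrix p Lam lab (N k) i j))\<^sup>2"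
    if "i < N k" "j < N k" for i j k
    by (rule Bmat_eq_quantization_matrix[OF assms(1) \<open>0 < p\<close> p_dvd N_dvd N_pos lab that])
  ultimately show ?thesis unfolding quantizable_def by blast
qed

end
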